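(* Let $n \ge 3$ and let $\mathbf{Y}_1^A,\dots,\mathbf{Y}_{N_A}^A \in \mathbb{R}^n$ be the observed sample vectors of the $N_A$ variables (voxels) of a region $A$, none of them constant. For $i,i'\in\{1,\dots,N_A\}$ let $r^{A,A}_{i,i'} = \widehat{Cor}(\mathbf{Y}_i^A,\mathbf{Y}_{i'}^A)$ denote their sample Pearson correlation, and let $\mathbf{U}_1^A,\dots,\mathbf{U}_{N_A}^A$ be their U-scores. Apply agglomerative hierarchical clustering with Ward's linkage to the U-scores $\mathbf{U}_1^A,\dots,\mathbf{U}_{N_A}^A$, and cut the resulting dendrogram at a fixed height $h_A \ge 0$. Then for every cluster $\nu_A$ thus obtained (with $|\nu_A|$ its number of elements, and indices $i,i'$ ranging over the voxels in $\nu_A$), $$1 - \frac{h_A^2}{2} \;\le\; \frac{1}{|\nu_A|^2}\sum_{i,i' \in \nu_A} r^{A,A}_{i,i'} \;\le\; 1 .$$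
   Context: Sample correlation: for $\mathbf{a},\mathbf{b}\in\mathbb{R}^n$ with means $\bar a,\bar b$, let $\mathbf{a}^c=\mathbf{a}-\bar a\mathbf{1}_n$, $\mathbf{b}^c=\mathbf{b}-\bar b\mathbf{1}_n$; $\widehat{Cov}(\mathbf{a},\mathbf{b})=n^{-1}\langle\mathbf{a}^c,\mathbf{b}^c\rangle$, $\widehat{Var}(\mathbf{a})=n^{-1}\|\mathbf{a}^c\|^2$, $\widehat{Cor}(\mathbf{a},\mathbf{b})=\widehat{Cov}(\mathbf{a},\mathbf{b})/\sqrt{\widehat{Var}(\mathbf{a})\widehat{Var}(\mathbf{b})}$. U-scores: the U-score of $\mathbf{Y}_i^A$ is $\mathbf{U}_i^A=\mathbf{H}^T\mathbf{Z}_i^A\in\mathbb{R}^{n-1}$, where $\mathbf{Z}_i^A$ is the standardized (centered and normalized to unit Euclidean norm) version of $\mathbf{Y}_i^A$ and $\mathbf{H}$ is a fixed matrix with orthonormal columns spanning the orthogonal complement of $\mathbf{1}_n$ (obtained by Gram–Schmidt); U-scores lie on the unit sphere and satisfy $\widehat{Cor}(\mathbf{Y}_i,\mathbf{Y}_j)=\mathbf{U}_i^T\mathbf{U}_j = 1-\|\mathbf{U}_i-\mathbf{U}_j\|^2/2$. Ward's linkage: the distance between two clusters $\nu_1,\nu_2$ of U-scores is $D(\nu_1,\nu_2)=\sqrt{\frac{2|\nu_1||\nu_2|}{|\nu_1|+|\nu_2|}\,\|\overline{\mathbf{U}}^{\nu_1}-\overline{\mathbf{U}}^{\nu_2}\|^2}$,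 where $\overline{\mathbf{U}}^{\nu}$ is the centroid of cluster $\nu$; agglomerative clustering repeatedly merges the two clusters at smallest linkage distance, and cutting the dendrogram at height $h_A$ means retaining only merges performed at heights at most $h_A$, yielding the clusters. *)

theory Defs
  imports Complex_Main
begin

text \<open>Vectors in R^n are represented as functions nat => real, only indices j < n matter.
  Sample vectors: Y i j = j-th observation of voxel i (i < N, j < n).\<close>

definition smean :: "nat \<Rightarrow> (nat \<Rightarrow> real) \<Rightarrow> real" where
  "smean n a = (\<Sum>j<n. a j) / real n"

definition scenter :: "nat \<Rightarrow> (nat \<Rightarrow> real) \<Rightarrow> nat \<Rightarrow> real" where
  "scenter n a = (\<lambda>j. a j - smean n a)"

definition scov :: "nat \<Rightarrow> (nat \<Rightarrow> real) \<Rightarrow> (nat \<Rightarrow> real) \<Rightarrow> real" where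
  "scov n a b = (\<Sum>j<n. scenter n a j * scenter n b j) / real n"

definition svar :: "nat \<Rightarrow> (nat \<Rightarrow> real) \<Rightarrow> real" where
  "svar n a = (\<Sum>j<n. (scenter n a j)^2) / real n"

definition scor :: "nat \<Rightarrow> (nat \<Rightarrow> real) \<Rightarrow> (nat \<Rightarrow> real) \<Rightarrow> real" where
  "scor n a b = scov n a b / sqrt (svar n a * svar n b)"

definition standardize :: "nat \<Rightarrow> (nat \<Rightarrow> real) \<Rightarrow> nat \<Rightarrow> real" where
  "standardize n a = (\<lambda>j. scenter n a j / sqrt (\<Sum>j'<n. (scenter n a j')^2))"

definition is_U_basis :: "nat \<Rightarrow> (nat \<Rightarrow> nat \<Rightarrow> real) \<Rightarrow> bool" where
  "is_U_basis n H \<longleftrightarrow>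
     (\<forall>k<n-1. \<forall>l<n-1. (\<Sum>j<n. H j k * H j l) = (if k = l then 1 else 0)) \<and>
     (\<forall>k<n-1. (\<Sum>j<n. H j k) = 0) \<and>
     (\<forall>v. (\<Sum>j<n. v j) = 0 \<longrightarrow> (\<exists>c. \<forall>j<n. v j = (\<Sum>k<n-1. c k * H j k)))"

definition uscore :: "nat \<Rightarrow> (nat \<Rightarrow> nat \<Rightarrow> real) \<Rightarrow> (nat \<Rightarrow> real) \<Rightarrow> nat \<Rightarrow> real" where
  "uscore n H a = (\<lambda>k. if k < n - 1 then (\<Sum>j<n. H j k * standardize n a j) else 0)"

definition sqnorm :: "nat \<Rightarrow> (nat \<Rightarrow> real) \<Rightarrow> real" where
  "sqnorm d v = (\<Sum>k<d. (v k)^2)"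

definition centroid :: "(nat \<Rightarrow> nat \<Rightarrow> real) \<Rightarrow> nat set \<Rightarrow> nat \<Rightarrow> real" where
  "centroid U c = (\<lambda>k. (\<Sum>i\<in>c. U i k) / real (card c))"

definition ward_dist :: "nat \<Rightarrow> (nat \<Rightarrow> nat \<Rightarrow> real) \<Rightarrow> nat set \<Rightarrow> nat set \<Rightarrow> real" where
  "ward_dist d U c1 c2 =
     sqrt (2 * real (card c1) * real (card c2) / real (card c1 + card c2)
           * sqnorm d (\<lambda>k. centroid U c1 k - centroid U c2 k))"

text \<open>One agglomerative step: merge two distinct clusters of P at minimal linkage
  (ties broken arbitrarily), the merge height being that linkage.\<close>
definition ward_step :: "nat \<Rightarrow> (nat \<Rightarrow> nat \<Rightarrow> real) \<Rightarrow> nat set set \<Rightarrow> nat set set \<Rightarrow> real \<Rightarrow> bool" where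
  "ward_step d U P P' h \<longleftrightarrow>
     (\<exists>c1 c2. c1 \<in> P \<and> c2 \<in> P \<and> c1 \<noteq> c2 \<and>
        (\<forall>a\<in>P. \<forall>b\<in>P. a \<noteq> b \<longrightarrow> ward_dist d U c1 c2 \<le> ward_dist d U a b) \<and>
        P' = insert (c1 \<union> c2) (P - {c1, c2}) \<and>
        h = ward_dist d U c1 c2)"

text \<open>A full Ward dendrogram of N points: Ps k is the partition of {0..<N} after k merges,
  hs k is the height of the (k+1)-th merge.\<close>
definition ward_dendrogram :: "nat \<Rightarrow> (nat \<Rightarrow> nat \<Rightarrow> real) \<Rightarrow> nat \<Rightarrow> (nat \<Rightarrow> nat set set) \<Rightarrow> (nat \<Rightarrow> real) \<Rightarrow> bool" where
  "ward_dendrogram d U N Ps hs \<longleftrightarrow>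
     Ps 0 = {{i} | i. i < N} \<and>
     (\<forall>k < N - 1. ward_step d U (Ps k) (Ps (Suc k)) (hs k))"

text \<open>Cutting at height h: perform the merges in order as long as their heights are at most h.\<close>
definition ward_cut :: "nat \<Rightarrow> (nat \<Rightarrow> nat set set) \<Rightarrow> (nat \<Rightarrow> real) \<Rightarrow> real \<Rightarrow> nat set set" where
  "ward_cut N Ps hs h = Ps (GREATEST k. k \<le> N - 1 \<and> (\<forall>j<k. hs j \<le> h))"

end

theory Submission
  imports Defs "HOL-Library.Disjoint_Sets"
begin

(* Let W(c) be the within-cluster sum of squares of the U-scores in c. With Ward's linkage
   normalised as here, merging c1 and c2 raises W by exactly D(c1,c2)^2/2 (Huygens
   decomposition), so by induction along the dendrogram every cluster produced by merges of
   height at most h has W(c) <= (|c| - 1) h^2/2. U-scores are unit vectors whose inner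
   products are the sample correlations, hence the mean correlation within c is
   |centroid c|^2 = 1 - W(c)/|c|, which lies between 1 - h^2/2 and 1. *)

definition within_ss :: "nat \<Rightarrow> (nat \<Rightarrow> nat \<Rightarrow> real) \<Rightarrow> nat set \<Rightarrow> real" where
  "within_ss d U c = (\<Sum>i\<in>c. sqnorm d (\<lambda>k. U i k - centroid U c k))"

lemma sqnorm_nonneg: "0 \<le> sqnorm d v"
  by (simp add: sqnorm_def sum_nonneg)

lemma within_ss_nonneg: "0 \<le> within_ss d U c"
  by (simp add: within_ss_def sum_nonneg sqnorm_nonneg)

lemma within_ss_singleton [simp]: "within_ss d U {i} = 0"
  by (simp add: within_ss_def centroid_def sqnorm_def)

lemma ward_dist_nonneg: "0 \<le> ward_dist d U c1 c2"
  by (simp add: ward_dist_def sqnorm_nonneg)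

lemma card_mult_centroid:
  assumes "finite c"
  shows "real (card c) * centroid U c k = (\<Sum>i\<in>c. U i k)"
  using assms by (cases "c = {}") (simp_all add: centroid_def)

lemma sum_sq_deviation:
  fixes x :: "'a \<Rightarrow> real"
  assumes "finite c"
  defines "m \<equiv> real (card c)"
  assumes "m * \<mu> = (\<Sum>i\<in>c. x i)"
  shows "(\<Sum>i\<in>c. (x i - \<mu>)^2) = (\<Sum>i\<in>c. (x i)^2) - m * \<mu>^2"
proof -
  have "(\<Sum>i\<in>c. 2 * x i * \<mu>) = 2 * (\<Sum>i\<in>c. x i) * \<mu>"
    by (simp add: sum_distrib_left sum_distrib_right)
  then have "(\<Sum>i\<in>c. (x i - \<mu>)^2) = (\<Sum>i\<in>c. (x i)^2) - 2 * (\<Sum>i\<in>c. x i) * \<mu> + m * \<mu>^2"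
    by (simp add: power2_diff sum.distrib sum_subtractf m_def)
  then show ?thesis
    using assms(3) by (simp add: power2_eq_square algebra_simps)
qed

lemma within_ss_eq:
  assumes "finite c"
  shows "within_ss d U c = (\<Sum>i\<in>c. sqnorm d (U i)) - real (card c) * sqnorm d (centroid U c)"
proof -
  have "within_ss d U c = (\<Sum>k<d. \<Sum>i\<in>c. (U i k - centroid U c k)^2)"
    unfolding within_ss_def sqnorm_def by (rule sum.swap)
  also have "\<dots> = (\<Sum>k<d. (\<Sum>i\<in>c. (U i k)^2) - real (card c) * (centroid U c k)^2)"
    using assms by (intro sum.cong refl sum_sq_deviation card_mult_centroid)
  also have "\<dots> = (\<Sum>i\<in>c. sqnorm d (U i)) - real (card c) * sqnorm d (centroid U c)"
    unfolding sqnorm_def sum_subtractf sum_distrib_left by (subst sum.swap) simp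
  finally show ?thesis .
qed

lemma weighted_sq_merge:
  fixes a b x y :: real
  assumes "a > 0" "b > 0"
  shows "a * x^2 + b * y^2 - (a + b) * ((a * x + b * y) / (a + b))^2 = a * b / (a + b) * (x - y)^2"
proof -
  have "a + b \<noteq> 0" using assms by simp
  then have "(a + b) * ((a * x + b * y) / (a + b))^2 = (a * x + b * y)^2 / (a + b)"
    by (simp add: power2_eq_square)
  with \<open>a + b \<noteq> 0\<close> show ?thesis
    by (simp add: divide_simps power2_eq_square) algebra
qed

lemma within_ss_Un:
  assumes "finite c1" "finite c2" "c1 \<inter> c2 = {}" "c1 \<noteq> {}" "c2 \<noteq> {}"
  shows "within_ss d U (c1 \<union> c2) = within_ss d U c1 + within_ss d U c2 + (ward_dist d U c1 c2)^2 / 2"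
proof -
  define a where "a = real (card c1)"
  define b where "b = real (card c2)"
  have ab: "a > 0" "b > 0" using assms by (simp_all add: a_def b_def card_gt_0_iff)
  have card_Un: "real (card (c1 \<union> c2)) = a + b"
    using assms by (simp add: card_Un_disjoint a_def b_def)
  have centroid_Un: "centroid U (c1 \<union> c2) k = (a * centroid U c1 k + b * centroid U c2 k) / (a + b)" for k
  proof -
    have "(a + b) * centroid U (c1 \<union> c2) k = (\<Sum>i\<in>c1 \<union> c2. U i k)"
      unfolding card_Un[symmetric] using assms by (simp add: card_mult_centroid)
    also have "\<dots> = a * centroid U c1 k + b * centroid U c2 k"
      using assms by (simp add: sum.union_disjoint card_mult_centroid a_def b_def)
    finally show ?thesis using ab by (simp add: field_simps)
  qed
  have ward_sq: "(ward_dist d U c1 c2)^2 / 2 = a * b / (a + b) * sqnorm d (\<lambda>k. centroid U c1 k - centroid U c2 k)"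
    using ab unfolding ward_dist_def by (simp add: sqnorm_nonneg a_def b_def field_simps)
  have "a * sqnorm d (centroid U c1) + b * sqnorm d (centroid U c2) - (a + b) * sqnorm d (centroid U (c1 \<union> c2))
      = a * b / (a + b) * sqnorm d (\<lambda>k. centroid U c1 k - centroid U c2 k)"
    unfolding sqnorm_def sum_distrib_left sum.distrib[symmetric] sum_subtractf[symmetric] centroid_Un
    by (intro sum.cong refl weighted_sq_merge ab)
  moreover have "(\<Sum>i\<in>c1 \<union> c2. sqnorm d (U i)) = (\<Sum>i\<in>c1. sqnorm d (U i)) + (\<Sum>i\<in>c2. sqnorm d (U i))"
    using assms by (simp add: sum.union_disjoint)
  ultimately show ?thesis
    unfolding within_ss_eq[OF assms(1)] within_ss_eq[OF assms(2)] within_ss_eq[OF finite_UnI[OF assms(1,2)]]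
      card_Un ward_sq a_def[symmetric] b_def[symmetric]
    by linarith
qed

lemma partition_on_merge:
  assumes P: "partition_on A P" and "p \<in> P" "q \<in> P"
  shows "partition_on A (insert (p \<union> q) (P - {p, q}))"
proof (rule partition_onI)
  show "\<Union>(insert (p \<union> q) (P - {p, q})) = A"
    using assms partition_onD1[OF P] by auto
  show "{} \<notin> insert (p \<union> q) (P - {p, q})"
    using assms partition_onD3[OF P] by auto
  have blocks: "disjnt r s" if "r \<in> P" "s \<in> P" "r \<noteq> s" for r s
    using partition_onD2[OF P] that by (simp add: pairwise_def)
  show "disjnt r s"
    if rs: "r \<in> insert (p \<union> q) (P - {p, q})" "s \<in> insert (p \<union> q) (P - {p, q})" "r \<noteq> s" for r s
  proof -
    consider "r = p \<union> q" "s \<in> P - {p, q}" | "r \<in> P - {p, q}" "s = p \<union> q" | "r \<in> P - {p, q}" "s \<in> P - {p, q}"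
      using rs by blast
    then show ?thesis
    proof cases
      case 1
      then show ?thesis using assms(2,3) blocks by (auto simp: disjnt_Un1)
    next
      case 2
      then show ?thesis using assms(2,3) blocks by (auto simp: disjnt_Un2)
    next
      case 3
      then show ?thesis using blocks rs(3) by blast
    qed
  qed
qed

lemma ward_step_partition_on:
  assumes "ward_step d U P P' h" "partition_on A P"
  shows "partition_on A P'"
  using assms partition_on_merge unfolding ward_step_def by metis

lemma ward_dendrogram_partition_on:
  assumes "ward_dendrogram d U N Ps hs" "k \<le> N - 1"
  shows "partition_on {..<N} (Ps k)"
  using assms(2)
proof (induction k)
  case 0
  have "Ps 0 = (\<lambda>i. {i}) ` {..<N}"
    using assms(1) by (auto simp: ward_dendrogram_def)
  then show ?case by (simp add: partition_on_singletons)
next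
  case (Suc k)
  then have "ward_step d U (Ps k) (Ps (Suc k)) (hs k)"
    using assms(1) by (simp add: ward_dendrogram_def)
  then show ?case
    using Suc by (auto intro: ward_step_partition_on)
qed

lemma ward_step_within_ss_le:
  assumes step: "ward_step d U P P' h'" and part: "partition_on A P" "finite A"
    and "h' \<le> h"
    and bound: "\<forall>c\<in>P. within_ss d U c \<le> (real (card c) - 1) * h^2 / 2"
  shows "\<forall>c\<in>P'. within_ss d U c \<le> (real (card c) - 1) * h^2 / 2"
proof -
  obtain c1 c2 where c: "c1 \<in> P" "c2 \<in> P" "c1 \<noteq> c2"
    and P': "P' = insert (c1 \<union> c2) (P - {c1, c2})" and h': "h' = ward_dist d U c1 c2"
    using step unfolding ward_step_def by blast
  have "c1 \<subseteq> A" "c2 \<subseteq> A"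
    using c partition_onD1[OF part(1)] by auto
  then have fin: "finite c1" "finite c2"
    using part(2) by (auto intro: finite_subset)
  have ne: "c1 \<noteq> {}" "c2 \<noteq> {}"
    using c part by (auto dest: partition_onD3)
  have dj: "c1 \<inter> c2 = {}"
    using c partition_onD2[OF part(1)] unfolding disjoint_def by blast
  have "(ward_dist d U c1 c2)^2 \<le> h^2"
    using ward_dist_nonneg \<open>h' \<le> h\<close> h' by (simp add: power_mono)
  moreover have "within_ss d U c1 \<le> (real (card c1) - 1) * h^2 / 2"
    and "within_ss d U c2 \<le> (real (card c2) - 1) * h^2 / 2"
    using bound c by auto
  ultimately have "within_ss d U (c1 \<union> c2)
      \<le> (real (card c1) - 1) * h^2 / 2 + (real (card c2) - 1) * h^2 / 2 + h^2 / 2"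
    unfolding within_ss_Un[OF fin dj ne] by linarith
  also have "\<dots> = (real (card (c1 \<union> c2)) - 1) * h^2 / 2"
    using fin dj by (simp add: card_Un_disjoint field_simps)
  finally have "within_ss d U (c1 \<union> c2) \<le> (real (card (c1 \<union> c2)) - 1) * h^2 / 2" .
  then show ?thesis
    using bound P' by blast
qed

lemma ward_dendrogram_within_ss_le:
  assumes dend: "ward_dendrogram d U N Ps hs"
  shows "k \<le> N - 1 \<Longrightarrow> \<forall>j<k. hs j \<le> h \<Longrightarrow> c \<in> Ps k
    \<Longrightarrow> within_ss d U c \<le> (real (card c) - 1) * h^2 / 2"
proof (induction k arbitrary: c)
  case 0
  then obtain i where "c = {i}"
    using dend by (auto simp: ward_dendrogram_def)
  then show ?case by simp
next
  case (Suc k)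
  have step: "ward_step d U (Ps k) (Ps (Suc k)) (hs k)"
    using dend Suc.prems(1) by (simp add: ward_dendrogram_def)
  have part: "partition_on {..<N} (Ps k)"
    using ward_dendrogram_partition_on[OF dend] Suc.prems(1) by simp
  have "\<forall>c\<in>Ps k. within_ss d U c \<le> (real (card c) - 1) * h^2 / 2"
    using Suc.IH Suc.prems(1,2) by simp
  then have "\<forall>c\<in>Ps (Suc k). within_ss d U c \<le> (real (card c) - 1) * h^2 / 2"
    using Suc.prems(2) by (intro ward_step_within_ss_le[OF step part]) simp_all
  then show ?case
    using Suc.prems(3) by blast
qed

lemma ward_cutE:
  assumes "c \<in> ward_cut N Ps hs h"
  obtains k where "k \<le> N - 1" "\<forall>j<k. hs j \<le> h" "c \<in> Ps k"
proof
  let ?K = "GREATEST k. k \<le> N - 1 \<and> (\<forall>j<k. hs j \<le> h)"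
  have "?K \<le> N - 1 \<and> (\<forall>j<?K. hs j \<le> h)"
    by (rule GreatestI_nat[where k = 0 and b = "N - 1"]) auto
  then show "?K \<le> N - 1" "\<forall>j<?K. hs j \<le> h" by auto
  show "c \<in> Ps ?K" using assms by (simp add: ward_cut_def)
qed

lemma sum_sum_inner_eq_sqnorm_centroid:
  assumes "finite c"
  shows "(\<Sum>i\<in>c. \<Sum>i'\<in>c. \<Sum>k<d. U i k * U i' k) = real (card c)^2 * sqnorm d (centroid U c)"
proof -
  have "(\<Sum>i\<in>c. \<Sum>i'\<in>c. \<Sum>k<d. U i k * U i' k) = (\<Sum>i\<in>c. \<Sum>k<d. \<Sum>i'\<in>c. U i k * U i' k)"
    by (intro sum.cong refl sum.swap)
  also have "\<dots> = (\<Sum>k<d. \<Sum>i\<in>c. \<Sum>i'\<in>c. U i k * U i' k)"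
    by (rule sum.swap)
  also have "\<dots> = (\<Sum>k<d. (real (card c) * centroid U c k)^2)"
    unfolding card_mult_centroid[OF assms] power2_eq_square sum_product ..
  also have "\<dots> = real (card c)^2 * sqnorm d (centroid U c)"
    by (simp add: sqnorm_def sum_distrib_left power_mult_distrib)
  finally show ?thesis .
qed

lemma mean_inner_eq_1_minus_within_ss:
  assumes "finite c" "c \<noteq> {}" "\<forall>i\<in>c. sqnorm d (U i) = 1"
  shows "(\<Sum>i\<in>c. \<Sum>i'\<in>c. \<Sum>k<d. U i k * U i' k) / real (card c)^2
    = 1 - within_ss d U c / real (card c)"
proof -
  have "real (card c) > 0" using assms by (simp add: card_gt_0_iff)
  moreover have "within_ss d U c = real (card c) - real (card c) * sqnorm d (centroid U c)"
    using assms by (simp add: within_ss_eq)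
  ultimately show ?thesis
    using assms(1,2) by (simp add: sum_sum_inner_eq_sqnorm_centroid field_simps)
qed

lemma sum_scenter_eq_0:
  assumes "n > 0"
  shows "(\<Sum>j<n. scenter n a j) = 0"
  using assms by (simp add: scenter_def smean_def sum_subtractf)

lemma sum_sq_scenter_pos:
  assumes "\<exists>j<n. \<exists>j'<n. a j \<noteq> a j'"
  shows "(\<Sum>j<n. (scenter n a j)^2) > 0"
proof -
  obtain j j' where "j < n" "j' < n" "a j \<noteq> a j'"
    using assms by blast
  then obtain l where "l < n" "scenter n a l \<noteq> 0"
    unfolding scenter_def by (metis eq_iff_diff_eq_0)
  then show ?thesis
    by (intro sum_pos2[where i = l]) auto
qed

lemma is_U_basis_preserves_inner:
  assumes U: "is_U_basis n H" and x: "(\<Sum>j<n. x j) = 0"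
  shows "(\<Sum>k<n-1. (\<Sum>j<n. H j k * x j) * (\<Sum>j<n. H j k * y j)) = (\<Sum>j<n. x j * y j)"
proof -
  obtain c where c: "\<forall>j<n. x j = (\<Sum>k<n-1. c k * H j k)"
    using U x unfolding is_U_basis_def by blast
  have coeff: "(\<Sum>j<n. H j k * x j) = c k" if k: "k < n - 1" for k
  proof -
    have "(\<Sum>j<n. H j k * x j) = (\<Sum>j<n. H j k * (\<Sum>l<n-1. c l * H j l))"
      using c by (intro sum.cong) auto
    also have "\<dots> = (\<Sum>l<n-1. c l * (\<Sum>j<n. H j k * H j l))"
      unfolding sum_distrib_left by (subst sum.swap) (simp add: mult_ac)
    also have "\<dots> = (\<Sum>l<n-1. c l * (if k = l then 1 else 0))"
      using U k unfolding is_U_basis_def by (intro sum.cong) auto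
    also have "\<dots> = c k" using k by (simp add: if_distrib cong: if_cong)
    finally show ?thesis .
  qed
  have "(\<Sum>k<n-1. (\<Sum>j<n. H j k * x j) * (\<Sum>j<n. H j k * y j))
      = (\<Sum>k<n-1. c k * (\<Sum>j<n. H j k * y j))"
    using coeff by (intro sum.cong) auto
  also have "\<dots> = (\<Sum>j<n. y j * (\<Sum>k<n-1. c k * H j k))"
    unfolding sum_distrib_left by (subst sum.swap) (simp add: mult_ac)
  also have "\<dots> = (\<Sum>j<n. x j * y j)"
    using c by (intro sum.cong) auto
  finally show ?thesis .
qed

lemma scor_eq_inner_uscore:
  assumes U: "is_U_basis n H" and n: "n > 0"
    and a: "\<exists>j<n. \<exists>j'<n. a j \<noteq> a j'" and b: "\<exists>j<n. \<exists>j'<n. b j \<noteq> b j'"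
  shows "scor n a b = (\<Sum>k<n-1. uscore n H a k * uscore n H b k)"
proof -
  define A where "A = (\<Sum>j<n. (scenter n a j)^2)"
  define B where "B = (\<Sum>j<n. (scenter n b j)^2)"
  have "A > 0" "B > 0"
    using sum_sq_scenter_pos[OF a] sum_sq_scenter_pos[OF b] by (simp_all add: A_def B_def)
  have centred: "(\<Sum>j<n. standardize n a j) = 0"
    unfolding standardize_def sum_divide_distrib[symmetric] using sum_scenter_eq_0[OF n] by simp
  have "(\<Sum>k<n-1. uscore n H a k * uscore n H b k)
      = (\<Sum>k<n-1. (\<Sum>j<n. H j k * standardize n a j) * (\<Sum>j<n. H j k * standardize n b j))"
    by (simp add: uscore_def)
  also have "\<dots> = (\<Sum>j<n. standardize n a j * standardize n b j)"
    by (rule is_U_basis_preserves_inner[OF U centred])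
  also have "\<dots> = (\<Sum>j<n. scenter n a j * scenter n b j) / (sqrt A * sqrt B)"
    unfolding standardize_def A_def[symmetric] B_def[symmetric] sum_divide_distrib
    by (intro sum.cong) auto
  also have "\<dots> = scor n a b"
  proof -
    have "sqrt (A / real n * (B / real n)) = sqrt A * sqrt B / real n"
      using n by (simp add: real_sqrt_mult real_sqrt_divide)
    then show ?thesis
      unfolding scor_def scov_def svar_def A_def[symmetric] B_def[symmetric]
      using n \<open>A > 0\<close> \<open>B > 0\<close> by (simp add: field_simps)
  qed
  finally show ?thesis by simp
qed

lemma scor_self_eq_1:
  assumes "n > 0" "\<exists>j<n. \<exists>j'<n. a j \<noteq> a j'"
  shows "scor n a a = 1"
proof -
  have "svar n a > 0"
    using sum_sq_scenter_pos[OF assms(2)] assms(1) by (simp add: svar_def)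
  moreover have "scov n a a = svar n a"
    by (simp add: scov_def svar_def power2_eq_square)
  ultimately show ?thesis by (simp add: scor_def)
qed

lemma sqnorm_uscore:
  assumes "is_U_basis n H" "n > 0" "\<exists>j<n. \<exists>j'<n. a j \<noteq> a j'"
  shows "sqnorm (n - 1) (uscore n H a) = 1"
  using scor_eq_inner_uscore[OF assms assms(3)] scor_self_eq_1[OF assms(2,3)]
  by (simp add: sqnorm_def power2_eq_square)

lemma ward_cut_cluster:
  assumes "ward_dendrogram d U N Ps hs" "c \<in> ward_cut N Ps hs h"
  shows "c \<subseteq> {..<N}" "c \<noteq> {}" "within_ss d U c \<le> (real (card c) - 1) * h^2 / 2"
proof -
  obtain k where k: "k \<le> N - 1" "\<forall>j<k. hs j \<le> h" "c \<in> Ps k"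
    using assms(2) by (rule ward_cutE)
  have "partition_on {..<N} (Ps k)"
    using ward_dendrogram_partition_on[OF assms(1) k(1)] .
  then show "c \<subseteq> {..<N}" "c \<noteq> {}"
    using k(3) by (auto dest: partition_onD1 partition_onD3)
  show "within_ss d U c \<le> (real (card c) - 1) * h^2 / 2"
    using ward_dendrogram_within_ss_le[OF assms(1) k] .
qed

lemma mean_scor_eq_1_minus_within_ss:
  assumes U: "is_U_basis n H" and n: "n > 0"
    and Y: "\<forall>i\<in>c. \<exists>j<n. \<exists>j'<n. Y i j \<noteq> Y i j'" and c: "finite c" "c \<noteq> {}"
  shows "(\<Sum>i\<in>c. \<Sum>i'\<in>c. scor n (Y i) (Y i')) / real (card c)^2
    = 1 - within_ss (n - 1) (\<lambda>i. uscore n H (Y i)) c / real (card c)"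
proof -
  have "(\<Sum>i\<in>c. \<Sum>i'\<in>c. scor n (Y i) (Y i'))
      = (\<Sum>i\<in>c. \<Sum>i'\<in>c. \<Sum>k<n-1. uscore n H (Y i) k * uscore n H (Y i') k)"
    using Y by (intro sum.cong refl scor_eq_inner_uscore[OF U n]) auto
  also have "\<dots> / real (card c)^2 = 1 - within_ss (n - 1) (\<lambda>i. uscore n H (Y i)) c / real (card c)"
    using Y c by (intro mean_inner_eq_1_minus_within_ss ballI sqnorm_uscore[OF U n]) auto
  finally show ?thesis .
qed

theorem theorem1:
  fixes n N :: nat and Y :: "nat \<Rightarrow> nat \<Rightarrow> real" and H :: "nat \<Rightarrow> nat \<Rightarrow> real"
    and Ps :: "nat \<Rightarrow> nat set set" and hs :: "nat \<Rightarrow> real" and hA :: real and \<nu> :: "nat set"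
  assumes "n \<ge> 3"
    and "\<forall>i<N. \<exists>j<n. \<exists>j'<n. Y i j \<noteq> Y i j'"
    and "is_U_basis n H"
    and "ward_dendrogram (n - 1) (\<lambda>i. uscore n H (Y i)) N Ps hs"
    and "hA \<ge> 0"
    and "\<nu> \<in> ward_cut N Ps hs hA"
  shows "1 - hA^2 / 2 \<le> (\<Sum>i\<in>\<nu>. \<Sum>i'\<in>\<nu>. scor n (Y i) (Y i')) / real (card \<nu>)^2
       \<and> (\<Sum>i\<in>\<nu>. \<Sum>i'\<in>\<nu>. scor n (Y i) (Y i')) / real (card \<nu>)^2 \<le> 1"
proof -
  define W where "W = within_ss (n - 1) (\<lambda>i. uscore n H (Y i)) \<nu>"
  define m where "m = real (card \<nu>)"
  have \<nu>: "\<nu> \<subseteq> {..<N}" "\<nu> \<noteq> {}" and "W \<le> (m - 1) * hA^2 / 2"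
    unfolding W_def m_def by (rule ward_cut_cluster[OF assms(4,6)])+
  then have "finite \<nu>" "m > 0"
    by (auto simp: m_def card_gt_0_iff intro: finite_subset)
  have mean: "(\<Sum>i\<in>\<nu>. \<Sum>i'\<in>\<nu>. scor n (Y i) (Y i')) / m^2 = 1 - W / m"
    unfolding W_def m_def using assms(1,2,3) \<nu> \<open>finite \<nu>\<close>
    by (intro mean_scor_eq_1_minus_within_ss) auto
  have "(m - 1) * hA^2 / 2 \<le> hA^2 / 2 * m"
    by (simp add: field_simps)
  then have "W / m \<le> hA^2 / 2"
    using \<open>W \<le> (m - 1) * hA^2 / 2\<close> \<open>m > 0\<close> by (simp add: pos_divide_le_eq)
  moreover have "0 \<le> W / m"
    using \<open>m > 0\<close> by (simp add: W_def within_ss_nonneg)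
  ultimately show ?thesis
    unfolding m_def[symmetric] mean by linarith
qed

end
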